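(* Assume: (A1) $f(x,y)$ and each component of $g(x,y)$ are convex in $y$ for each fixed $x$, and $f,g$ are twice continuously differentiable; (A2) $Y\subseteq\mathbb{R}^m$ is a compact convex set with $\{y:\exists x\in X \text{ such that } g(x,y)\le 0\}\subseteq\mathrm{int}(Y)$; (R1) for each $x\in X$ there exists $y$ with $g(x,y)<0$. Then for each fixed $(\lambda,x)$, the function $\mu\mapsto -h_\mu(\lambda,x)$ is decreasing on $\mu\ge0$, and the functions $-h_\mu$ epi-converge to $-h$ as $\mu\to0$ (with $\mu>0$).
   Context: Let $f:\mathbb{R}^n\times\mathbb{R}^m\to\mathbb{R}$, $g:\mathbb{R}^n\times\mathbb{R}^m\to\mathbb{R}^p$, $G:\mathbb{R}^n\to\mathbb{R}^q$; vector inequalities componentwise; $X=\{x:G(x)\le0\}$. $h(\lambda,x)=\min_y\{f(x,y)+\lambda^{\mathsf T}g(x,y):y\in Y\}$ and, for $\mu\ge0$, $h_\mu(\lambda,x)=\min_y\{\mu\|y\|^2+f(x,y)+\lambda^{\mathsf T}g(x,y):y\in Y\}$ (so $h_0=h$), with $Y$ from (A2). Functions $\phi_\mu$ epi-converge to $\phi$ as $\mu\to0$ if their epigraphs converge to the epigraph of $\phi$ in the Painlevé–Kuratowski sense; equivalently, for every $z$, $\liminf\phi_\mu(z^\mu)\ge\phi(z)$ for all $z^\mu\to z$, and $\limsup\phi_\mu(z^\mu)\le\phi(z)$ for some $z^\mu\to z$. *)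

theory Defs
  imports "HOL-Analysis.Analysis"
begin

definition twice_cont_diff :: "('a::euclidean_space \<Rightarrow> 'b::real_normed_vector) \<Rightarrow> bool" where
  "twice_cont_diff F \<longleftrightarrow>
     (\<exists>F' F''. (\<forall>z. (F has_derivative blinfun_apply (F' z)) (at z)) \<and>
               (\<forall>z. (F' has_derivative blinfun_apply (F'' z)) (at z)) \<and>
               continuous_on UNIV F'')"

definition hfun :: "'m set \<Rightarrow> ('n \<Rightarrow> 'm \<Rightarrow> real) \<Rightarrow> ('n \<Rightarrow> 'm \<Rightarrow> real^'p)
                     \<Rightarrow> real^'p \<Rightarrow> 'n \<Rightarrow> real" where
  "hfun Y f g lam x = Inf ((\<lambda>y. f x y + lam \<bullet> g x y) ` Y)"

definition hmu :: "('m::real_normed_vector) set \<Rightarrow> ('n \<Rightarrow> 'm \<Rightarrow> real) \<Rightarrow> ('n \<Rightarrow> 'm \<Rightarrow> real^'p)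
                    \<Rightarrow> real \<Rightarrow> real^'p \<Rightarrow> 'n \<Rightarrow> real" where
  "hmu Y f g \<mu> lam x = Inf ((\<lambda>y. \<mu> * (norm y)\<^sup>2 + f x y + lam \<bullet> g x y) ` Y)"

text \<open>Epi-convergence of phi_mu to psi as mu -> 0 (mu > 0), via the sequential characterization.\<close>
definition epi_converges :: "(real \<Rightarrow> 'a::topological_space \<Rightarrow> real) \<Rightarrow> ('a \<Rightarrow> real) \<Rightarrow> bool" where
  "epi_converges \<phi> \<psi> \<longleftrightarrow>
     (\<forall>z. (\<forall>zz. (zz \<longlongrightarrow> z) (at_right 0) \<longrightarrow>
              Liminf (at_right 0) (\<lambda>\<mu>. ereal (\<phi> \<mu> (zz \<mu>))) \<ge> ereal (\<psi> z)) \<and>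
          (\<exists>zz. (zz \<longlongrightarrow> z) (at_right 0) \<and>
              Limsup (at_right 0) (\<lambda>\<mu>. ereal (\<phi> \<mu> (zz \<mu>))) \<le> ereal (\<psi> z)))"

end

theory Submission
  imports Defs
begin

text \<open>Only continuity of f and g and compactness of Y matter. Since mu |y|^2 \<ge> 0, the value
  h_mu grows with mu and h_mu \<ge> h, so the constant recovery sequence gives the limsup inequality.
  For the liminf inequality, fix a minimiser y0 of the Lagrangian at (lambda, x); then
  h_mu(z_mu) is bounded by the penalised Lagrangian at (mu, z_mu, y0), which tends to h(lambda, x)
  by joint continuity: the optimal value is upper semicontinuous in the parameters.\<close>

lemma twice_cont_diff_imp_continuous_on:
  assumes "twice_cont_diff F"
  shows "continuous_on UNIV F"
proof -
  from assms obtain F' where "\<forall>z. (F has_derivative blinfun_apply (F' z)) (at z)"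
    unfolding twice_cont_diff_def by blast
  then show ?thesis
    by (intro continuous_at_imp_continuous_on ballI) (blast intro: has_derivative_continuous)
qed

lemma continuous_on_slice:
  assumes "continuous_on UNIV (\<lambda>(w, y). \<Phi> w y)"
  shows "continuous_on S (\<Phi> w)"
  using continuous_on_compose2[OF assms, of S "\<lambda>y. (w, y)"] by (simp add: continuous_intros)

lemma bdd_below_image_compact:
  fixes \<phi> :: "'a::topological_space \<Rightarrow> real"
  assumes "compact Y" and "continuous_on Y \<phi>"
  shows "bdd_below (\<phi> ` Y)"
  using assms by (intro bounded_imp_bdd_below compact_imp_bounded compact_continuous_image)

lemma Limsup_Inf_image_le:
  fixes \<Phi> :: "'a::topological_space \<Rightarrow> 'b::topological_space \<Rightarrow> real"
  assumes Y: "compact Y" and \<Phi>: "continuous_on UNIV (\<lambda>(w, y). \<Phi> w y)"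
    and w: "(w \<longlongrightarrow> w\<^sub>0) F" and F: "F \<noteq> bot"
  shows "Limsup F (\<lambda>t. ereal (Inf (\<Phi> (w t) ` Y))) \<le> ereal (Inf (\<Phi> w\<^sub>0 ` Y))"
proof (cases "Y = {}")
  case True
  then show ?thesis using F by (simp add: Limsup_const)
next
  case False
  obtain y\<^sub>0 where y\<^sub>0: "y\<^sub>0 \<in> Y" "\<forall>y\<in>Y. \<Phi> w\<^sub>0 y\<^sub>0 \<le> \<Phi> w\<^sub>0 y"
    using continuous_attains_inf[OF Y False continuous_on_slice[OF \<Phi>]] by blast
  then have min: "Inf (\<Phi> w\<^sub>0 ` Y) = \<Phi> w\<^sub>0 y\<^sub>0"
    by (intro cInf_eq_minimum) auto
  have bound: "eventually (\<lambda>t. ereal (Inf (\<Phi> (w t) ` Y)) \<le> ereal (\<Phi> (w t) y\<^sub>0)) F"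
    using y\<^sub>0(1) by (intro always_eventually allI)
      (simp add: cINF_lower bdd_below_image_compact[OF Y continuous_on_slice[OF \<Phi>]])
  from continuous_on_tendsto_compose[OF \<Phi> tendsto_Pair[OF w tendsto_const]]
  have "((\<lambda>t. ereal (\<Phi> (w t) y\<^sub>0)) \<longlongrightarrow> ereal (\<Phi> w\<^sub>0 y\<^sub>0)) F"
    by (intro tendsto_intros) simp
  then have "Limsup F (\<lambda>t. ereal (\<Phi> (w t) y\<^sub>0)) = ereal (\<Phi> w\<^sub>0 y\<^sub>0)"
    using F by (intro lim_imp_Limsup) auto
  then show ?thesis
    using Limsup_mono[OF bound] min by simp
qed

definition penalized_lagrangian ::
    "('n \<Rightarrow> 'm::real_normed_vector \<Rightarrow> real) \<Rightarrow> ('n \<Rightarrow> 'm \<Rightarrow> real^'p)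
      \<Rightarrow> real \<Rightarrow> real^'p \<Rightarrow> 'n \<Rightarrow> 'm \<Rightarrow> real" where
  "penalized_lagrangian f g \<mu> lam x y = \<mu> * (norm y)\<^sup>2 + f x y + lam \<bullet> g x y"

lemma hmu_eq_Inf_penalized_lagrangian:
  "hmu Y f g \<mu> lam x = Inf (penalized_lagrangian f g \<mu> lam x ` Y)"
  by (simp add: hmu_def penalized_lagrangian_def)

lemma hmu_zero: "hmu Y f g 0 = hfun Y f g"
  by (simp add: fun_eq_iff hmu_def hfun_def)

lemma continuous_on_penalized_lagrangian:
  fixes f :: "'n::topological_space \<Rightarrow> 'm::real_normed_vector \<Rightarrow> real"
  assumes f: "continuous_on UNIV (\<lambda>(x, y). f x y)" and g: "continuous_on UNIV (\<lambda>(x, y). g x y)"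
  shows "continuous_on UNIV (\<lambda>((\<mu>, lam, x), y). penalized_lagrangian f g \<mu> lam x y)"
proof -
  have "continuous_on UNIV (\<lambda>p. f (snd (snd (fst p))) (snd p))"
    using continuous_on_compose2[OF f, of UNIV "\<lambda>p. (snd (snd (fst p)), snd p)"]
    by (simp add: continuous_intros split_beta)
  moreover have "continuous_on UNIV (\<lambda>p. g (snd (snd (fst p))) (snd p))"
    using continuous_on_compose2[OF g, of UNIV "\<lambda>p. (snd (snd (fst p)), snd p)"]
    by (simp add: continuous_intros split_beta)
  ultimately show ?thesis
    unfolding penalized_lagrangian_def split_beta by (intro continuous_intros)
qed

lemma hmu_mono:
  assumes Y: "compact Y"
    and f: "continuous_on UNIV (\<lambda>(x, y). f x y)" and g: "continuous_on UNIV (\<lambda>(x, y). g x y)"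
    and "\<mu>\<^sub>1 \<le> \<mu>\<^sub>2"
  shows "hmu Y f g \<mu>\<^sub>1 lam x \<le> hmu Y f g \<mu>\<^sub>2 lam x"
proof (cases "Y = {}")
  case True
  then show ?thesis by (simp add: hmu_def)
next
  case False
  have "bdd_below (penalized_lagrangian f g \<mu>\<^sub>1 lam x ` Y)"
    using continuous_on_slice[OF continuous_on_penalized_lagrangian[OF f g], of Y "(\<mu>\<^sub>1, lam, x)"]
    by (intro bdd_below_image_compact[OF Y]) simp
  moreover have "penalized_lagrangian f g \<mu>\<^sub>1 lam x y \<le> penalized_lagrangian f g \<mu>\<^sub>2 lam x y" for y
    using \<open>\<mu>\<^sub>1 \<le> \<mu>\<^sub>2\<close> by (simp add: penalized_lagrangian_def mult_right_mono)
  ultimately show ?thesis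
    unfolding hmu_eq_Inf_penalized_lagrangian using False by (intro cINF_mono) auto
qed

lemma Liminf_neg_hmu_ge:
  assumes Y: "compact Y"
    and f: "continuous_on UNIV (\<lambda>(x, y). f x y)" and g: "continuous_on UNIV (\<lambda>(x, y). g x y)"
    and z: "(z \<longlongrightarrow> (lam, x)) (at_right 0)"
  shows "ereal (- hfun Y f g lam x)
           \<le> Liminf (at_right 0) (\<lambda>\<mu>. ereal (- hmu Y f g \<mu> (fst (z \<mu>)) (snd (z \<mu>))))"
proof -
  have "((\<lambda>\<mu>. (\<mu>, z \<mu>)) \<longlongrightarrow> (0, lam, x)) (at_right (0::real))"
    using z by (intro tendsto_Pair) (simp_all add: tendsto_ident_at)
  from Limsup_Inf_image_le[where \<Phi>="\<lambda>(\<mu>, lam, x). penalized_lagrangian f g \<mu> lam x",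
      OF Y continuous_on_penalized_lagrangian[OF f g] this]
  have "Limsup (at_right 0) (\<lambda>\<mu>. ereal (hmu Y f g \<mu> (fst (z \<mu>)) (snd (z \<mu>))))
          \<le> ereal (hfun Y f g lam x)"
    by (simp add: split_beta hmu_eq_Inf_penalized_lagrangian flip: hmu_zero)
  moreover have "Liminf (at_right 0) (\<lambda>\<mu>. ereal (- hmu Y f g \<mu> (fst (z \<mu>)) (snd (z \<mu>))))
      = - Limsup (at_right 0) (\<lambda>\<mu>. ereal (hmu Y f g \<mu> (fst (z \<mu>)) (snd (z \<mu>))))"
    using ereal_Liminf_uminus[of _ "\<lambda>\<mu>. ereal (hmu Y f g \<mu> (fst (z \<mu>)) (snd (z \<mu>)))"] by simp
  ultimately show ?thesis
    by (metis ereal_minus_le_minus uminus_ereal.simps(1))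
qed

lemma Limsup_neg_hmu_le:
  assumes Y: "compact Y"
    and f: "continuous_on UNIV (\<lambda>(x, y). f x y)" and g: "continuous_on UNIV (\<lambda>(x, y). g x y)"
  shows "Limsup (at_right 0) (\<lambda>\<mu>. ereal (- hmu Y f g \<mu> lam x)) \<le> ereal (- hfun Y f g lam x)"
proof -
  have "eventually (\<lambda>\<mu>. ereal (- hmu Y f g \<mu> lam x) \<le> ereal (- hfun Y f g lam x)) (at_right 0)"
    using eventually_at_right_less[of 0]
    by eventually_elim (use hmu_mono[OF Y f g, of 0] in \<open>simp add: hmu_zero\<close>)
  from Limsup_mono[OF this] show ?thesis
    by (simp add: Limsup_const)
qed

theorem proposition2:
  fixes f :: "real^'n \<Rightarrow> real^'m \<Rightarrow> real"
    and g :: "real^'n \<Rightarrow> real^'m \<Rightarrow> real^'p"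
    and G :: "real^'n \<Rightarrow> real^'q"
    and X :: "(real^'n) set" and Y :: "(real^'m) set"
  assumes X_def: "X = {x. \<forall>j. G x $ j \<le> 0}"
    and A1_f_convex: "\<And>x. convex_on UNIV (f x)"
    and A1_g_convex: "\<And>x i. convex_on UNIV (\<lambda>y. g x y $ i)"
    and A1_f_C2: "twice_cont_diff (\<lambda>(x, y). f x y)"
    and A1_g_C2: "twice_cont_diff (\<lambda>(x, y). g x y)"
    and A2_compact: "compact Y"
    and A2_convex: "convex Y"
    and A2_int: "{y. \<exists>x\<in>X. \<forall>i. g x y $ i \<le> 0} \<subseteq> interior Y"
    and R1: "\<And>x. x \<in> X \<Longrightarrow> \<exists>y. \<forall>i. g x y $ i < 0"
  shows "(\<forall>lam x. \<forall>\<mu>1 \<mu>2. 0 \<le> \<mu>1 \<longrightarrow> \<mu>1 \<le> \<mu>2 \<longrightarrow>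
            - hmu Y f g \<mu>2 lam x \<le> - hmu Y f g \<mu>1 lam x)
       \<and> epi_converges (\<lambda>\<mu> (lam, x). - hmu Y f g \<mu> lam x) (\<lambda>(lam, x). - hfun Y f g lam x)"
proof -
  note f = twice_cont_diff_imp_continuous_on[OF A1_f_C2]
  note g = twice_cont_diff_imp_continuous_on[OF A1_g_C2]
  note mono = hmu_mono[OF A2_compact f g]
  note liminf = Liminf_neg_hmu_ge[OF A2_compact f g]
  note limsup = Limsup_neg_hmu_le[OF A2_compact f g]
  have "epi_converges (\<lambda>\<mu> (lam, x). - hmu Y f g \<mu> lam x) (\<lambda>(lam, x). - hfun Y f g lam x)"
    unfolding epi_converges_def
  proof (intro allI conjI impI exI)
    fix z :: "(real^'p) \<times> (real^'n)" and zz :: "real \<Rightarrow> (real^'p) \<times> (real^'n)"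
    assume "(zz \<longlongrightarrow> z) (at_right 0)"
    with liminf[of zz "fst z" "snd z"]
    show "ereal ((\<lambda>(lam, x). - hfun Y f g lam x) z)
        \<le> Liminf (at_right 0) (\<lambda>\<mu>. ereal ((\<lambda>\<mu> (lam, x). - hmu Y f g \<mu> lam x) \<mu> (zz \<mu>)))"
      by (simp add: split_beta)
  next
    fix z :: "(real^'p) \<times> (real^'n)"
    show "((\<lambda>_. z) \<longlongrightarrow> z) (at_right 0)" by simp
    show "Limsup (at_right 0) (\<lambda>\<mu>. ereal ((\<lambda>\<mu> (lam, x). - hmu Y f g \<mu> lam x) \<mu> z))
        \<le> ereal ((\<lambda>(lam, x). - hfun Y f g lam x) z)"
      using limsup[of "fst z" "snd z"] by (simp add: split_beta)
  qed
  then show ?thesis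
    using mono by simp
qed

end
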